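(* Let $q$ be a power of $2$, $n\ge 2$, and let $M=(m_{ij})$ be an $n\times n$ matrix with entries in $\mathbb{F}_q$. (a) $\mathrm{Num}'_0(M)_q\neq\emptyset$, and either $0\in\mathrm{Num}'_0(M)$ or $\mathrm{Num}_0(M)\supseteq\mathbb{F}_q^*$. (b) $\mathrm{Num}'_0(M)_q=\{0\}$ if and only if $m_{ii}+m_{ij}+m_{ji}+m_{jj}=0$ for all $1\le i<j\le n$. (c) Assume $\mathrm{Num}'_0(M)_q\neq\{0\}$. If $n=2$ then $\mathrm{Num}'_0(M)_q=\mathbb{F}_q^*$; if $n=3$ then $\mathrm{Num}'_0(M)_q\supseteq\mathbb{F}_q^*$; if $n\ge 4$ then $\mathrm{Num}'_0(M)_q=\mathbb{F}_q$.
   Context: The Hermitian form on $\mathbb{F}_{q^2}^n$ is $\langle u,v\rangle=\sum_i u_i^q v_i$. For an $n\times n$ matrix $M$ over $\mathbb{F}_{q^2}$: $\mathrm{Num}_0(M)=\{\langle u,Mu\rangle: u\in\mathbb{F}_{q^2}^n,\ \langle u,u\rangle=0\}$ and $\mathrm{Num}'_0(M)=\{\langle u,Mu\rangle: u\in\mathbb{F}_{q^2}^n\setminus\{0\},\ \langle u,u\rangle=0\}$. For $M$ with entries in $\mathbb{F}_q$: $\mathrm{Num}'_0(M)_q=\{\langle u,Mu\rangle: u\in\mathbb{F}_q^n\setminus\{0\},\ \langle u,u\rangle=0\}$; for $u=(x_1,\dots,x_n)\in\mathbb{F}_q^n$, $\langle u,u\rangle=\sum x_i^2$ and $\langle u,Mu\rangle=\sum_{i,j}m_{ij}x_ix_j$.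 *)

theory Defs
  imports Main
begin

text \<open>F_{q^2} is modelled as a finite field type 'a with CARD('a) = q^2;
  F_q is its unique subfield of order q, i.e. the fixed points of x \<mapsto> x^q.\<close>

definition subfield_q :: "nat \<Rightarrow> ('a::field) set" where
  "subfield_q q = {x. x ^ q = x}"

definition vecs :: "nat \<Rightarrow> 'a set \<Rightarrow> (nat \<Rightarrow> ('a::zero)) set" where
  "vecs n S = {u. (\<forall>i<n. u i \<in> S) \<and> (\<forall>i\<ge>n. u i = 0)}"

definition herm :: "nat \<Rightarrow> nat \<Rightarrow> (nat \<Rightarrow> 'a::field) \<Rightarrow> (nat \<Rightarrow> 'a) \<Rightarrow> 'a" where
  "herm q n u v = (\<Sum>i<n. u i ^ q * v i)"

definition matvec :: "nat \<Rightarrow> (nat \<Rightarrow> nat \<Rightarrow> 'a::field) \<Rightarrow> (nat \<Rightarrow> 'a) \<Rightarrow> (nat \<Rightarrow> 'a)" where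
  "matvec n M u = (\<lambda>i. if i < n then (\<Sum>j<n. M i j * u j) else 0)"

definition Num0 :: "nat \<Rightarrow> nat \<Rightarrow> (nat \<Rightarrow> nat \<Rightarrow> 'a::field) \<Rightarrow> 'a set" where
  "Num0 q n M = {herm q n u (matvec n M u) | u. u \<in> vecs n UNIV \<and> herm q n u u = 0}"

definition Num0' :: "nat \<Rightarrow> nat \<Rightarrow> (nat \<Rightarrow> nat \<Rightarrow> 'a::field) \<Rightarrow> 'a set" where
  "Num0' q n M = {herm q n u (matvec n M u) | u.
      u \<in> vecs n UNIV \<and> u \<noteq> (\<lambda>_. 0) \<and> herm q n u u = 0}"

definition Num0'_q :: "nat \<Rightarrow> nat \<Rightarrow> (nat \<Rightarrow> nat \<Rightarrow> 'a::field) \<Rightarrow> 'a set" where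
  "Num0'_q q n M = {herm q n u (matvec n M u) | u.
      u \<in> vecs n (subfield_q q) \<and> u \<noteq> (\<lambda>_. 0) \<and> herm q n u u = 0}"

end

theory Submission
  imports Defs "HOL-Number_Theory.Residues"
begin

text \<open>For \<open>u \<in> F_q\<^sup>n\<close> we have \<open>u\<^sub>i\<^sup>q = u\<^sub>i\<close>, so in characteristic 2
  \<open>\<langle>u,u\<rangle> = \<Sum> u\<^sub>i\<^sup>2 = (\<Sum> u\<^sub>i)\<^sup>2\<close> and \<open>\<langle>u,Mu\<rangle> = Q u = \<Sum> m\<^sub>i\<^sub>j u\<^sub>i u\<^sub>j\<close>:
  \<open>Num'\<^sub>0(M)\<^sub>q\<close> is the set of values of the quadratic form \<open>Q\<close> on nonzero vectors with
  coordinate sum 0. The vector \<open>s (e\<^sub>i + e\<^sub>j)\<close> gives the value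
  \<open>s\<^sup>2 (m\<^sub>i\<^sub>i + m\<^sub>i\<^sub>j + m\<^sub>j\<^sub>i + m\<^sub>j\<^sub>j)\<close>, and squaring is bijective on \<open>F_q\<close>, so one nonzero
  such coefficient already yields all of \<open>F_q\<^sup>*\<close>; if they all vanish, \<open>Q\<close> vanishes on the
  sum-zero hyperplane. For \<open>n = 2\<close> every vector of that hyperplane is of the form
  \<open>s (e\<^sub>1 + e\<^sub>2)\<close>. For \<open>n \<ge> 4\<close> the hyperplane contains independent \<open>v, w\<close> orthogonal
  for the polar form, and with \<open>a\<^sup>2 = Q v\<close>, \<open>b\<^sup>2 = Q w\<close> we get
  \<open>Q (b v + a w) = (a b)\<^sup>2 + (a b)\<^sup>2 = 0\<close>.\<close>

lemma CHAR_eq_prime_of_card: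
  assumes "prime p" and "card (UNIV :: 'a::{field,finite} set) = p ^ m" and "m > 0"
  shows "CHAR('a) = p"
proof -
  have prime_CHAR: "prime CHAR('a)"
    by (intro prime_CHAR_semidom finite_imp_CHAR_pos) simp
  moreover have "CHAR('a) dvd p ^ m"
    using CHAR_dvd_CARD[where 'a='a] assms(2) by simp
  ultimately have "CHAR('a) dvd p"
    using prime_dvd_power by blast
  with prime_CHAR assms(1) show ?thesis
    by (simp add: primes_dvd_imp_eq)
qed

lemma two_eq_zero_if_CHAR_2:
  assumes "CHAR('a::semiring_1) = 2"
  shows "(2::'a) = 0"
  using of_nat_CHAR[where 'a='a] assms by simp

lemma inj_square_CHAR_2:
  assumes "CHAR('a::idom) = 2"
  shows "inj (\<lambda>x::'a. x ^ 2)"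
proof (rule injI)
  fix x y :: 'a
  assume "x ^ 2 = y ^ 2"
  have "(x + y) ^ 2 = x ^ 2 + y ^ 2"
    using assms by (intro freshmans_dream) simp_all
  also have "\<dots> = 0"
    using \<open>x ^ 2 = y ^ 2\<close> two_eq_zero_if_CHAR_2[OF assms] by simp
  finally have "x + y = 0"
    by simp
  then show "x = y"
    using uminus_CHAR_2[OF assms, of y] by (simp add: add_eq_0_iff2)
qed

lemma subfield_q_add:
  fixes x y :: "'a::field"
  assumes "prime CHAR('a)" and "q = CHAR('a) ^ k"
    and "x \<in> subfield_q q" and "y \<in> subfield_q q"
  shows "x + y \<in> subfield_q q"
  using assms freshmans_dream'[OF assms(1) assms(2), of x y] by (simp add: subfield_q_def)

lemma subfield_q_sum:
  fixes f :: "'b \<Rightarrow> 'a::field"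
  assumes "prime CHAR('a)" and "q = CHAR('a) ^ k"
    and "\<And>i. i \<in> A \<Longrightarrow> f i \<in> subfield_q q"
  shows "sum f A \<in> subfield_q q"
  using assms freshmans_dream_sum'[OF assms(1) assms(2), of f A] by (simp add: subfield_q_def)

lemma subfield_q_mult: "x \<in> subfield_q q \<Longrightarrow> y \<in> subfield_q q \<Longrightarrow> x * y \<in> subfield_q q"
  by (simp add: subfield_q_def power_mult_distrib)

lemma subfield_q_divide: "x \<in> subfield_q q \<Longrightarrow> y \<in> subfield_q q \<Longrightarrow> x / y \<in> subfield_q q"
  by (simp add: subfield_q_def power_divide)

lemma zero_in_subfield_q: "q > 0 \<Longrightarrow> 0 \<in> subfield_q q"
  by (simp add: subfield_q_def)

lemma one_in_subfield_q: "1 \<in> subfield_q q"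
  by (simp add: subfield_q_def)

lemma square_root_in_subfield_q:
  fixes d :: "'a::{field,finite}"
  assumes "CHAR('a) = 2" and "d \<in> subfield_q q"
  shows "\<exists>s \<in> subfield_q q. s ^ 2 = d"
proof -
  have "surj (\<lambda>x::'a. x ^ 2)"
    using inj_square_CHAR_2[OF assms(1)] by (simp add: finite_UNIV_inj_surj)
  then obtain s where s: "s ^ 2 = d"
    by (metis surjD)
  have "(s ^ q) ^ 2 = (s ^ 2) ^ q"
    by (simp flip: power_mult add: mult.commute)
  also have "\<dots> = s ^ 2"
    using assms(2) s by (simp add: subfield_q_def)
  finally have "s ^ q = s"
    using injD[OF inj_square_CHAR_2[OF assms(1)]] by blast
  with s show ?thesis
    by (auto simp: subfield_q_def)
qed

definition unit_vec :: "nat \<Rightarrow> nat \<Rightarrow> 'a::zero_neq_one" where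
  "unit_vec i = (\<lambda>l. if l = i then 1 else 0)"

definition coord_sum :: "nat \<Rightarrow> (nat \<Rightarrow> 'a::comm_monoid_add) \<Rightarrow> 'a" where
  "coord_sum n u = (\<Sum>a<n. u a)"

definition bilinear_form :: "nat \<Rightarrow> (nat \<Rightarrow> nat \<Rightarrow> 'a::comm_ring_1) \<Rightarrow> (nat \<Rightarrow> 'a) \<Rightarrow> (nat \<Rightarrow> 'a) \<Rightarrow> 'a" where
  "bilinear_form n M u v = (\<Sum>a<n. \<Sum>b<n. M a b * u a * v b)"

definition polar_form :: "nat \<Rightarrow> (nat \<Rightarrow> nat \<Rightarrow> 'a::comm_ring_1) \<Rightarrow> (nat \<Rightarrow> 'a) \<Rightarrow> (nat \<Rightarrow> 'a) \<Rightarrow> 'a" where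
  "polar_form n M u v = bilinear_form n M u v + bilinear_form n M v u"

definition pair_vec :: "'a::comm_ring_1 \<Rightarrow> nat \<Rightarrow> nat \<Rightarrow> nat \<Rightarrow> 'a" where
  "pair_vec s i j = (\<lambda>l. s * unit_vec i l + s * unit_vec j l)"

definition pair_coeff :: "(nat \<Rightarrow> nat \<Rightarrow> 'a::comm_ring_1) \<Rightarrow> nat \<Rightarrow> nat \<Rightarrow> 'a" where
  "pair_coeff M i j = M i i + M i j + M j i + M j j"

lemma coord_sum_lin_comb [simp]:
  fixes x y :: "'a::comm_semiring_1"
  shows "coord_sum n (\<lambda>l. x * u l + y * w l) = x * coord_sum n u + y * coord_sum n w"
  by (simp add: coord_sum_def sum.distrib sum_distrib_left)

lemma coord_sum_unit_vec [simp]: "i < n \<Longrightarrow> coord_sum n (unit_vec i) = 1"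
  by (simp add: coord_sum_def unit_vec_def)

lemma bilinear_form_lin_comb_left [simp]:
  "bilinear_form n M (\<lambda>l. x * u l + y * v l) w = x * bilinear_form n M u w + y * bilinear_form n M v w"
  by (simp add: bilinear_form_def algebra_simps sum.distrib sum_distrib_left)

lemma bilinear_form_lin_comb_right [simp]:
  "bilinear_form n M w (\<lambda>l. x * u l + y * v l) = x * bilinear_form n M w u + y * bilinear_form n M w v"
  by (simp add: bilinear_form_def algebra_simps sum.distrib sum_distrib_left)

lemma polar_form_lin_comb_right [simp]:
  "polar_form n M v (\<lambda>l. x * u l + y * w l) = x * polar_form n M v u + y * polar_form n M v w"
  by (simp add: polar_form_def algebra_simps)

lemma bilinear_form_unit_vec [simp]:
  assumes "i < n" and "j < n"
  shows "bilinear_form n M (unit_vec i) (unit_vec j) = M i j"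
proof -
  have "(\<Sum>b<n. M a b * unit_vec i a * unit_vec j b) = (if a = i then M a j else 0)" for a
    using \<open>j < n\<close> by (simp add: unit_vec_def if_distrib cong: if_cong)
  with \<open>i < n\<close> show ?thesis
    by (simp add: bilinear_form_def)
qed

lemma quadratic_form_lin_comb:
  "bilinear_form n M (\<lambda>l. x * u l + y * w l) (\<lambda>l. x * u l + y * w l) =
     x\<^sup>2 * bilinear_form n M u u + y\<^sup>2 * bilinear_form n M w w + x * y * polar_form n M u w"
  by (simp add: polar_form_def algebra_simps power2_eq_square)

lemma quadratic_form_pair_vec:
  assumes "i < n" and "j < n"
  shows "bilinear_form n M (pair_vec s i j) (pair_vec s i j) = s\<^sup>2 * pair_coeff M i j"
  using assms by (simp add: pair_vec_def pair_coeff_def algebra_simps power2_eq_square)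

lemma alternating_form_diag_eq_0:
  fixes c :: "nat \<Rightarrow> nat \<Rightarrow> 'a::comm_ring_1"
  assumes "\<And>a. a < n \<Longrightarrow> c a a = 0" and "\<And>a b. a < n \<Longrightarrow> b < n \<Longrightarrow> c a b + c b a = 0"
  shows "(\<Sum>a<n. \<Sum>b<n. c a b * u a * u b) = 0"
  using assms
proof (induction n)
  case (Suc n)
  have "(\<Sum>a<Suc n. \<Sum>b<Suc n. c a b * u a * u b) =
     (\<Sum>a<n. \<Sum>b<n. c a b * u a * u b) + (\<Sum>a<n. (c a n + c n a) * u a * u n) + c n n * u n * u n"
    by (simp add: sum.distrib algebra_simps)
  with Suc show ?case
    by simp
qed simp

text \<open>Subtracting the diagonal column by column turns \<open>M\<close> into an alternating matrix
  whose entries pair up to the coefficients \<open>pair_coeff M i j\<close>; the subtracted part is a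
  multiple of \<open>coord_sum n u\<close>.\<close>
lemma quadratic_form_eq_0_if_pair_coeff_eq_0:
  fixes M :: "nat \<Rightarrow> nat \<Rightarrow> 'a::comm_ring_1"
  assumes CHAR_2: "CHAR('a) = 2"
    and pair_coeff_0: "\<And>i j. i < j \<Longrightarrow> j < n \<Longrightarrow> pair_coeff M i j = 0"
    and "coord_sum n u = 0"
  shows "bilinear_form n M u u = 0"
proof -
  have "(\<Sum>a<n. \<Sum>b<n. (M a b - M b b) * u a * u b) =
      bilinear_form n M u u - coord_sum n u * (\<Sum>b<n. M b b * u b)"
    by (simp add: bilinear_form_def coord_sum_def left_diff_distrib sum_subtractf
        sum_product algebra_simps)
  also have "(\<Sum>a<n. \<Sum>b<n. (M a b - M b b) * u a * u b) = 0"
  proof (rule alternating_form_diag_eq_0)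
    fix a b assume "a < n" "b < n"
    have "M a b - M b b + (M b a - M a a) = (if a < b then pair_coeff M a b else pair_coeff M b a)"
      if "a \<noteq> b"
      using that minus_CHAR_2[OF CHAR_2] by (auto simp: pair_coeff_def algebra_simps)
    with pair_coeff_0 \<open>a < n\<close> \<open>b < n\<close> show "M a b - M b b + (M b a - M a a) = 0"
      by (cases a b rule: linorder_cases) auto
  qed simp
  finally show ?thesis
    using \<open>coord_sum n u = 0\<close> by simp
qed

lemma coord_sum_pair_vec:
  fixes s :: "'a::comm_ring_1"
  assumes "CHAR('a) = 2" and "i < n" and "j < n"
  shows "coord_sum n (pair_vec s i j) = 0"
  using assms two_eq_zero_if_CHAR_2[OF assms(1)] by (simp add: pair_vec_def)

lemma quadratic_form_isotropic_comb:
  fixes M :: "nat \<Rightarrow> nat \<Rightarrow> 'a::comm_ring_1"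
  assumes "CHAR('a) = 2" and "polar_form n M v w = 0"
    and "a\<^sup>2 = bilinear_form n M v v" and "b\<^sup>2 = bilinear_form n M w w"
  shows "bilinear_form n M (\<lambda>l. b * v l + a * w l) (\<lambda>l. b * v l + a * w l) = 0"
  unfolding quadratic_form_lin_comb
  using assms two_eq_zero_if_CHAR_2[OF assms(1)] by (simp add: mult.commute)

lemma unit_vec_in_vecs: "i < n \<Longrightarrow> q > 0 \<Longrightarrow> unit_vec i \<in> vecs n (subfield_q q)"
  by (auto simp: vecs_def unit_vec_def zero_in_subfield_q one_in_subfield_q)

lemma lin_comb_in_vecs:
  fixes x y :: "'a::field"
  assumes "prime CHAR('a)" and "q = CHAR('a) ^ k"
    and "u \<in> vecs n (subfield_q q)" and "w \<in> vecs n (subfield_q q)"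
    and "x \<in> subfield_q q" and "y \<in> subfield_q q"
  shows "(\<lambda>l. x * u l + y * w l) \<in> vecs n (subfield_q q)"
  using assms by (auto simp: vecs_def intro!: subfield_q_add subfield_q_mult)

lemma pair_vec_in_vecs:
  fixes s :: "'a::field"
  assumes "prime CHAR('a)" and "q = CHAR('a) ^ k"
    and "i < n" and "j < n" and "s \<in> subfield_q q"
  shows "pair_vec s i j \<in> vecs n (subfield_q q)"
  unfolding pair_vec_def using assms prime_gt_0_nat
  by (intro lin_comb_in_vecs unit_vec_in_vecs) simp_all

lemma bilinear_form_in_subfield_q:
  fixes M :: "nat \<Rightarrow> nat \<Rightarrow> 'a::field"
  assumes "prime CHAR('a)" and "q = CHAR('a) ^ k"
    and "\<forall>i<n. \<forall>j<n. M i j \<in> subfield_q q"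
    and "u \<in> vecs n (subfield_q q)" and "v \<in> vecs n (subfield_q q)"
  shows "bilinear_form n M u v \<in> subfield_q q"
proof -
  have "M a b * u a * v b \<in> subfield_q q" if "a < n" and "b < n" for a b
    using that assms(3-5) by (auto simp: vecs_def intro!: subfield_q_mult)
  then show ?thesis
    unfolding bilinear_form_def by (auto intro!: subfield_q_sum[OF assms(1,2)])
qed

lemma herm_matvec_eq_quadratic_form:
  assumes "u \<in> vecs n (subfield_q q)"
  shows "herm q n u (matvec n M u) = bilinear_form n M u u"
proof -
  have "herm q n u (matvec n M u) = (\<Sum>a<n. u a * (\<Sum>b<n. M a b * u b))"
    using assms unfolding herm_def
    by (intro sum.cong) (auto simp: matvec_def vecs_def subfield_q_def)
  also have "\<dots> = bilinear_form n M u u"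
    by (simp add: bilinear_form_def sum_distrib_left algebra_simps)
  finally show ?thesis .
qed

lemma herm_self_eq_coord_sum_square:
  fixes u :: "nat \<Rightarrow> 'a::field"
  assumes "CHAR('a) = 2" and "u \<in> vecs n (subfield_q q)"
  shows "herm q n u u = (coord_sum n u)\<^sup>2"
proof -
  have "herm q n u u = (\<Sum>a<n. (u a)\<^sup>2)"
    using assms(2) unfolding herm_def
    by (intro sum.cong) (auto simp: vecs_def subfield_q_def power2_eq_square)
  also have "\<dots> = (coord_sum n u)\<^sup>2"
    unfolding coord_sum_def using assms(1) by (intro freshmans_dream_sum [symmetric]) simp_all
  finally show ?thesis .
qed

lemma Num0'_q_eq_quadratic_form_values:
  fixes M :: "nat \<Rightarrow> nat \<Rightarrow> 'a::field"
  assumes "CHAR('a) = 2"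
  shows "Num0'_q q n M = {bilinear_form n M u u | u.
      u \<in> vecs n (subfield_q q) \<and> u \<noteq> (\<lambda>_. 0) \<and> coord_sum n u = 0}"
proof -
  have "(x = herm q n u (matvec n M u) \<and> u \<in> vecs n (subfield_q q) \<and> u \<noteq> (\<lambda>_. 0) \<and> herm q n u u = 0)
    \<longleftrightarrow> (x = bilinear_form n M u u \<and> u \<in> vecs n (subfield_q q) \<and> u \<noteq> (\<lambda>_. 0) \<and> coord_sum n u = 0)"
    for x u
    by (auto simp: herm_matvec_eq_quadratic_form herm_self_eq_coord_sum_square[OF assms])
  then show ?thesis
    unfolding Num0'_q_def by (simp only:)
qed

lemma Num0'_q_subset_Num0': "Num0'_q q n M \<subseteq> Num0' q n M"
  unfolding Num0'_q_def Num0'_def vecs_def by blast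

lemma Num0'_q_subset_Num0: "Num0'_q q n M \<subseteq> Num0 q n M"
  unfolding Num0'_q_def Num0_def vecs_def by blast

context
  fixes M :: "nat \<Rightarrow> nat \<Rightarrow> 'a::{field,finite}" and q k n :: nat
  assumes CHAR_2: "CHAR('a) = 2" and q_eq: "q = 2 ^ k"
    and M_entries: "\<forall>i<n. \<forall>j<n. M i j \<in> subfield_q q"
begin

lemma prime_CHAR_and_q_eq: "prime CHAR('a)" "q = CHAR('a) ^ k"
  using CHAR_2 q_eq by simp_all

lemma Num0'_q_subset_subfield_q: "Num0'_q q n M \<subseteq> subfield_q q"
  using bilinear_form_in_subfield_q[OF prime_CHAR_and_q_eq M_entries]
  by (auto simp: Num0'_q_eq_quadratic_form_values[OF CHAR_2])

lemma pair_value_in_Num0'_q: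
  assumes "i < n" and "j < n" and "i \<noteq> j" and "s \<in> subfield_q q" and "s \<noteq> 0"
  shows "s\<^sup>2 * pair_coeff M i j \<in> Num0'_q q n M"
proof -
  have "pair_vec s i j \<noteq> (\<lambda>_. 0)"
    using assms(3,5) by (auto simp: pair_vec_def unit_vec_def fun_eq_iff)
  moreover have "coord_sum n (pair_vec s i j) = 0"
    using assms(1,2) by (rule coord_sum_pair_vec[OF CHAR_2])
  moreover have "s\<^sup>2 * pair_coeff M i j = bilinear_form n M (pair_vec s i j) (pair_vec s i j)"
    by (rule quadratic_form_pair_vec[OF assms(1,2), symmetric])
  ultimately show ?thesis
    using pair_vec_in_vecs[OF prime_CHAR_and_q_eq assms(1,2,4)]
    unfolding Num0'_q_eq_quadratic_form_values[OF CHAR_2] by blast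
qed

lemma pair_coeff_in_Num0'_q:
  assumes "i < n" and "j < n" and "i \<noteq> j"
  shows "pair_coeff M i j \<in> Num0'_q q n M"
  using pair_value_in_Num0'_q[OF assms one_in_subfield_q] by simp

lemma Num0'_q_nonempty: "n \<ge> 2 \<Longrightarrow> Num0'_q q n M \<noteq> {}"
  using pair_coeff_in_Num0'_q[of 0 1] by auto

lemma Num0'_q_eq_zero_if_pair_coeffs_vanish:
  assumes "n \<ge> 2" and "\<And>i j. i < j \<Longrightarrow> j < n \<Longrightarrow> pair_coeff M i j = 0"
  shows "Num0'_q q n M = {0}"
proof -
  have "bilinear_form n M u u = 0" if "coord_sum n u = 0" for u
    using CHAR_2 assms(2) that by (rule quadratic_form_eq_0_if_pair_coeff_eq_0)
  then have "Num0'_q q n M \<subseteq> {0}"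
    unfolding Num0'_q_eq_quadratic_form_values[OF CHAR_2] by blast
  with Num0'_q_nonempty[OF assms(1)] show ?thesis
    by blast
qed

lemma units_subset_Num0'_q:
  assumes "i < j" and "j < n" and "pair_coeff M i j \<noteq> 0"
  shows "subfield_q q - {0} \<subseteq> Num0'_q q n M"
proof
  fix d :: 'a assume d: "d \<in> subfield_q q - {0}"
  have "pair_coeff M i j \<in> subfield_q q"
    using assms M_entries unfolding pair_coeff_def
    by (intro subfield_q_add[OF prime_CHAR_and_q_eq]) auto
  with d have "d / pair_coeff M i j \<in> subfield_q q"
    by (simp add: subfield_q_divide)
  then obtain s where s: "s \<in> subfield_q q" "s\<^sup>2 = d / pair_coeff M i j"
    using square_root_in_subfield_q[OF CHAR_2] by blast
  with assms(3) have d_eq: "d = s\<^sup>2 * pair_coeff M i j"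
    by simp
  with d have "s \<noteq> 0"
    by auto
  with d_eq pair_value_in_Num0'_q[of i j s] assms(1,2) s(1) show "d \<in> Num0'_q q n M"
    by simp
qed

lemma Num0'_q_subset_units_dim_2:
  assumes "n = 2" and "pair_coeff M 0 1 \<noteq> 0"
  shows "Num0'_q q n M \<subseteq> subfield_q q - {0}"
proof
  fix x assume x: "x \<in> Num0'_q q n M"
  then obtain u where u: "x = bilinear_form n M u u" "u \<in> vecs n (subfield_q q)"
    "u \<noteq> (\<lambda>_. 0)" "coord_sum n u = 0"
    unfolding Num0'_q_eq_quadratic_form_values[OF CHAR_2] by blast
  have "u 1 = u 0"
    using u(4) uminus_CHAR_2[OF CHAR_2, of "u 0"] assms(1)
    by (simp add: coord_sum_def numeral_2_eq_2 add_eq_0_iff)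
  have "u l = pair_vec (u 0) 0 1 l" for l
    using \<open>u 1 = u 0\<close> u(2) assms(1)
    by (cases "l < 2") (auto simp: vecs_def pair_vec_def unit_vec_def less_2_cases_iff)
  then have "u = pair_vec (u 0) 0 1" ..
  moreover from this have "u 0 \<noteq> 0"
    using u(3) by (auto simp: pair_vec_def)
  ultimately have "x \<noteq> 0"
    using u(1) assms quadratic_form_pair_vec[of 0 n 1 M "u 0"] by simp
  with x Num0'_q_subset_subfield_q show "x \<in> subfield_q q - {0}"
    by blast
qed

lemma polar_orthogonal_vec_exists:
  assumes "n \<ge> 4"
  obtains w c where "w \<in> vecs n (subfield_q q)" and "coord_sum n w = 0"
    and "polar_form n M (pair_vec 1 0 1) w = 0" and "w 1 = 0" and "c \<ge> 2" and "w c = 1"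
proof -
  let ?F = "subfield_q q :: 'a set"
  define v where "v = pair_vec (1::'a) 0 1"
  define w\<^sub>0 where "w\<^sub>0 = pair_vec (1::'a) 0 2"
  define t where "t = pair_vec (1::'a) 0 3"
  have vecs: "v \<in> vecs n ?F" "w\<^sub>0 \<in> vecs n ?F" "t \<in> vecs n ?F"
    unfolding v_def w\<^sub>0_def t_def using assms
    by (auto intro!: pair_vec_in_vecs[OF prime_CHAR_and_q_eq] one_in_subfield_q)
  have sums: "coord_sum n w\<^sub>0 = 0" "coord_sum n t = 0"
    unfolding w\<^sub>0_def t_def using assms coord_sum_pair_vec[OF CHAR_2] by simp_all
  have vals: "w\<^sub>0 1 = 0" "w\<^sub>0 2 = 1" "t 1 = 0" "t 2 = 0" "t 3 = 1"
    by (simp_all add: w\<^sub>0_def t_def pair_vec_def unit_vec_def)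
  show ?thesis
  proof (cases "polar_form n M v t = 0")
    case True
    with vecs sums vals show ?thesis
      by (intro that[of t 3]) (simp_all add: v_def)
  next
    case False
    define ratio where "ratio = polar_form n M v w\<^sub>0 / polar_form n M v t"
    define w where "w = (\<lambda>l. 1 * w\<^sub>0 l + ratio * t l)"
    have "polar_form n M v w = 0"
      unfolding w_def polar_form_lin_comb_right
      using False two_eq_zero_if_CHAR_2[OF CHAR_2] by (simp add: ratio_def)
    moreover have "ratio \<in> ?F"
      unfolding ratio_def polar_form_def using vecs M_entries
      by (intro subfield_q_divide subfield_q_add[OF prime_CHAR_and_q_eq]
          bilinear_form_in_subfield_q[OF prime_CHAR_and_q_eq]) auto
    then have "w \<in> vecs n ?F"
      unfolding w_def using vecs
      by (intro lin_comb_in_vecs[OF prime_CHAR_and_q_eq] one_in_subfield_q) auto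
    moreover have "coord_sum n w = 0"
      unfolding w_def coord_sum_lin_comb using sums by simp
    moreover have "w 1 = 0" "w 2 = 1"
      using vals by (simp_all add: w_def)
    ultimately show ?thesis
      by (intro that[of w 2]) (simp_all add: v_def)
  qed
qed

lemma zero_in_Num0'_q_if_polar_orthogonal:
  assumes v: "v \<in> vecs n (subfield_q q)" "coord_sum n v = 0"
    and w: "w \<in> vecs n (subfield_q q)" "coord_sum n w = 0"
    and orth: "polar_form n M v w = 0"
    and indep: "v i = 1" "w i = 0" "v c = 0" "w c = 1"
  shows "0 \<in> Num0'_q q n M"
proof -
  let ?F = "subfield_q q :: 'a set"
  obtain a where a: "a \<in> ?F" "a\<^sup>2 = bilinear_form n M v v"
    using square_root_in_subfield_q[OF CHAR_2]
      bilinear_form_in_subfield_q[OF prime_CHAR_and_q_eq M_entries v(1) v(1)] by blast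
  obtain b where b: "b \<in> ?F" "b\<^sup>2 = bilinear_form n M w w"
    using square_root_in_subfield_q[OF CHAR_2]
      bilinear_form_in_subfield_q[OF prime_CHAR_and_q_eq M_entries w(1) w(1)] by blast
  define u where "u = (\<lambda>l. b * v l + a * w l)"
  have "u \<in> vecs n ?F"
    unfolding u_def by (rule lin_comb_in_vecs[OF prime_CHAR_and_q_eq v(1) w(1) b(1) a(1)])
  moreover have "coord_sum n u = 0"
    using v(2) w(2) by (simp add: u_def)
  moreover have "0 = bilinear_form n M u u"
    unfolding u_def using CHAR_2 orth a(2) b(2) by (rule quadratic_form_isotropic_comb [symmetric])
  moreover have "0 = bilinear_form n M v v" if "u = (\<lambda>_. 0)"
  proof -
    have "u i = 0" "u c = 0"
      using that by simp_all
    with indep have "a = 0"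
      by (simp add: u_def)
    with a(2) show ?thesis
      by simp
  qed
  moreover have "v \<noteq> (\<lambda>_. 0)"
    using indep(1) by auto
  ultimately show ?thesis
    using v unfolding Num0'_q_eq_quadratic_form_values[OF CHAR_2] by blast
qed

lemma zero_in_Num0'_q:
  assumes "n \<ge> 4"
  shows "0 \<in> Num0'_q q n M"
proof -
  define v where "v = pair_vec (1::'a) 0 1"
  obtain w c where w: "w \<in> vecs n (subfield_q q)" "coord_sum n w = 0" "polar_form n M v w = 0"
    and w_vals: "w 1 = 0" "c \<ge> 2" "w c = 1"
    using polar_orthogonal_vec_exists[OF assms] unfolding v_def by blast
  have "v \<in> vecs n (subfield_q q)" "coord_sum n v = 0"
    unfolding v_def using assms
    by (auto intro!: pair_vec_in_vecs[OF prime_CHAR_and_q_eq] one_in_subfield_q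
        coord_sum_pair_vec[OF CHAR_2])
  moreover have "v 1 = 1" "v c = 0"
    using w_vals(2) by (simp_all add: v_def pair_vec_def unit_vec_def)
  ultimately show ?thesis
    using w w_vals by (intro zero_in_Num0'_q_if_polar_orthogonal)
qed

lemma Num0'_q_eq_zero_iff:
  assumes "n \<ge> 2"
  shows "Num0'_q q n M = {0} \<longleftrightarrow> (\<forall>i j. i < j \<and> j < n \<longrightarrow> pair_coeff M i j = 0)"
proof
  assume zero: "Num0'_q q n M = {0}"
  have "1 \<in> subfield_q q - {0::'a}"
    by (simp add: one_in_subfield_q)
  with zero show "\<forall>i j. i < j \<and> j < n \<longrightarrow> pair_coeff M i j = 0"
    using units_subset_Num0'_q by blast
qed (use Num0'_q_eq_zero_if_pair_coeffs_vanish[OF assms] in blast)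

lemma units_subset_Num0'_q_if_ne_zero:
  assumes "n \<ge> 2" and "Num0'_q q n M \<noteq> {0}"
  shows "subfield_q q - {0} \<subseteq> Num0'_q q n M"
  using assms units_subset_Num0'_q Num0'_q_eq_zero_iff by blast

lemma Num0'_q_dim_2:
  assumes "n = 2" and "Num0'_q q n M \<noteq> {0}"
  shows "Num0'_q q n M = subfield_q q - {0}"
proof -
  have "pair_coeff M 0 1 \<noteq> 0"
    using assms Num0'_q_eq_zero_iff by (auto simp: less_2_cases_iff)
  with assms show ?thesis
    using units_subset_Num0'_q_if_ne_zero Num0'_q_subset_units_dim_2 by (simp add: subset_antisym)
qed

lemma Num0'_q_dim_ge_4:
  assumes "n \<ge> 4" and "Num0'_q q n M \<noteq> {0}"
  shows "Num0'_q q n M = subfield_q q"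
  using assms units_subset_Num0'_q_if_ne_zero zero_in_Num0'_q Num0'_q_subset_subfield_q
  by fastforce

end

theorem proposition6:
  fixes M :: "nat \<Rightarrow> nat \<Rightarrow> 'a::{field, finite}"
    and q k n :: nat
  assumes q_def: "q = 2 ^ k" and k_pos: "k \<ge> 1"
    and card: "card (UNIV :: 'a set) = q ^ 2"
    and n_ge: "n \<ge> 2"
    and M_entries: "\<forall>i<n. \<forall>j<n. M i j \<in> subfield_q q"
  shows
    "(Num0'_q q n M \<noteq> {} \<and>
        (0 \<in> Num0' q n M \<or> subfield_q q - {0} \<subseteq> Num0 q n M))
     \<and> (Num0'_q q n M = {0} \<longleftrightarrow>
          (\<forall>i j. i < j \<and> j < n \<longrightarrow> M i i + M i j + M j i + M j j = 0))
     \<and> (Num0'_q q n M \<noteq> {0} \<longrightarrow>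
          (n = 2 \<longrightarrow> Num0'_q q n M = subfield_q q - {0}) \<and>
          (n = 3 \<longrightarrow> subfield_q q - {0} \<subseteq> Num0'_q q n M) \<and>
          (n \<ge> 4 \<longrightarrow> Num0'_q q n M = subfield_q q))"
proof -
  have CHAR_2: "CHAR('a) = 2"
    using CHAR_eq_prime_of_card[of 2 "k * 2"] card q_def k_pos by (simp add: power_mult)
  note Num0'_q_facts = Num0'_q_nonempty Num0'_q_eq_zero_iff units_subset_Num0'_q_if_ne_zero
    Num0'_q_dim_2 Num0'_q_dim_ge_4
  note Num0'_q_facts = Num0'_q_facts[OF CHAR_2 q_def M_entries]
  show ?thesis
  proof (intro conjI impI)
    show "Num0'_q q n M \<noteq> {}"
      using Num0'_q_facts(1) n_ge .
    show "0 \<in> Num0' q n M \<or> subfield_q q - {0} \<subseteq> Num0 q n M"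
      using Num0'_q_facts(3) n_ge Num0'_q_subset_Num0' Num0'_q_subset_Num0 by blast
    show "Num0'_q q n M = {0} \<longleftrightarrow> (\<forall>i j. i < j \<and> j < n \<longrightarrow> M i i + M i j + M j i + M j j = 0)"
      using Num0'_q_facts(2) n_ge by (simp add: pair_coeff_def)
  qed (use Num0'_q_facts(3-5) n_ge in auto)
qed

end
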